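(* For every integer $n\ge2$, the roots of $Q_n(x)$ are \[ x_{n,k}=-\frac{5+\tan^2\frac{(2k-1)\pi}{2n}}{4},\qquad k=1,2,\dots,\lfloor n/2\rfloor . \]
   Context: For $n\ge1$ let $\Xi_n$ be the poset on $\{x_1,\dots,x_n\}$ whose cover relations are exactly: $x_2\prec x_1$, $x_3\prec x_2$, and for $3\le i\le n-1$, $x_i\prec x_{i+1}$ if $i$ is odd and $x_{i+1}\prec x_i$ if $i$ is even (so $x_1>x_2>x_3<x_4>x_5<\cdots$). A filter of a poset is an up-closed subset. The matchable Lucas cube $\Omega_n$ is the graph whose vertices are the filters of $\Xi_n$, two filters adjacent iff one is obtained from the other by deleting a single element. $q_{n,k}$ denotes the number of induced subgraphs of $\Omega_n$ isomorphic to the $k$-dimensional hypercube, and $Q_n(x)=\sum_{k\ge0}q_{n,k}x^k$ is the cube polynomial of $\Omega_n$. *)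

theory Defs
  imports Complex_Main "HOL-Computational_Algebra.Polynomial"
begin

text \<open>The poset Xi_n on {x_1,...,x_n}; element x_i is represented by the natural number i.
  xi_cover n i j means that x_i is covered by x_j (x_i < x_j is a cover relation).\<close>
definition xi_cover :: "nat \<Rightarrow> nat \<Rightarrow> nat \<Rightarrow> bool" where
  "xi_cover n i j \<longleftrightarrow> i \<in> {1..n} \<and> j \<in> {1..n} \<and>
     ((i = 2 \<and> j = 1) \<or> (i = 3 \<and> j = 2) \<or>
      (\<exists>m. 3 \<le> m \<and> m \<le> n - 1 \<and>
          ((odd m \<and> i = m \<and> j = m + 1) \<or> (even m \<and> i = m + 1 \<and> j = m))))"

definition xi_le :: "nat \<Rightarrow> nat \<Rightarrow> nat \<Rightarrow> bool" where
  "xi_le n = (xi_cover n)\<^sup>*\<^sup>*"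

definition xi_filters :: "nat \<Rightarrow> nat set set" where
  "xi_filters n = {F. F \<subseteq> {1..n} \<and> (\<forall>i j. i \<in> F \<longrightarrow> j \<in> {1..n} \<longrightarrow> xi_le n i j \<longrightarrow> j \<in> F)}"

definition omega_adj :: "nat set \<Rightarrow> nat set \<Rightarrow> bool" where
  "omega_adj F G \<longleftrightarrow> (\<exists>a\<in>F. G = F - {a}) \<or> (\<exists>a\<in>G. F = G - {a})"

definition hypercube_adj :: "nat set \<Rightarrow> nat set \<Rightarrow> bool" where
  "hypercube_adj A B \<longleftrightarrow> card ((A - B) \<union> (B - A)) = 1"

definition induces_cube :: "'a set \<Rightarrow> ('a \<Rightarrow> 'a \<Rightarrow> bool) \<Rightarrow> nat \<Rightarrow> 'a set \<Rightarrow> bool" where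
  "induces_cube V E k S \<longleftrightarrow> S \<subseteq> V \<and>
     (\<exists>f. bij_betw f (Pow {..<k}) S \<and>
          (\<forall>A\<in>Pow {..<k}. \<forall>B\<in>Pow {..<k}. E (f A) (f B) \<longleftrightarrow> hypercube_adj A B))"

definition q :: "nat \<Rightarrow> nat \<Rightarrow> nat" where
  "q n k = card {S. induces_cube (xi_filters n) omega_adj k S}"

text \<open>Cube polynomial Q_n(x) = sum_k q_{n,k} x^k.  The sum may be truncated at k = n since
  an induced k-cube has 2^k vertices, all subsets of {1..n}, so q n k = 0 for k > n.\<close>
definition cube_poly :: "nat \<Rightarrow> 'a::comm_semiring_1 poly" where
  "cube_poly n = (\<Sum>k\<le>n. monom (of_nat (q n k)) k)"

end

theory Submission
  imports Defs
begin

text \<open>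
  The filters of \<open>\<Xi>\<^sub>n\<close> form a union-closed family of subsets of \<open>{1..n}\<close>, and
  \<open>\<Omega>\<^sub>n\<close> is the subgraph it induces in the hypercube.  In such a family the induced
  \<open>k\<close>-cubes are exactly the intervals \<open>{L \<union> B | B \<subseteq> A}\<close> with \<open>A\<close> a \<open>k\<close>-set of
  elements each of which can be added to the member \<open>L\<close>; hence
  \<open>Q\<^sub>n(x) = \<Sum>\<^sub>L (1 + x)\<^bsup>a(L)\<^esup>\<close>, where \<open>a(L)\<close> counts the elements addable to the filter
  \<open>L\<close>.  Splitting the filters according to whether they contain \<open>x\<^sub>n\<close> shows that
  \<open>W\<^sub>n(y) = \<Sum>\<^sub>L y\<^bsup>a(L)\<^esup>\<close> satisfies \<open>W\<^sub>n = W\<^sub>n\<^sub>-\<^sub>1 + y W\<^sub>n\<^sub>-\<^sub>2\<close> for \<open>n \<ge> 4\<close>, with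
  \<open>W\<^sub>2 = 1 + 2y\<close> and \<open>W\<^sub>3 = 1 + 3y\<close>.  So \<open>Q\<^sub>n\<close> is the Lucas-type polynomial
  \<open>L\<^sub>n\<close> with \<open>L\<^sub>0 = 2\<close>, \<open>L\<^sub>1 = 1\<close>, \<open>L\<^sub>n = L\<^sub>n\<^sub>-\<^sub>1 + (1 + x) L\<^sub>n\<^sub>-\<^sub>2\<close>, of degree at most
  \<open>\<lfloor>n/2\<rfloor>\<close>.  At \<open>x = -(5 + tan\<^sup>2 t)/4\<close> we have \<open>1 + x = -1/(4 cos\<^sup>2 t)\<close>, and
  the recurrence becomes that of \<open>2 cos(n t)/(2 cos t)\<^sup>n\<close>, which vanishes at
  \<open>t = (2k - 1)\<pi>/(2n)\<close>.  These give \<open>\<lfloor>n/2\<rfloor>\<close> distinct roots, hence all of them.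
\<close>

section \<open>Induced cubes in union-closed set families\<close>

lemma hypercube_adj_iff: "hypercube_adj A B \<longleftrightarrow> (\<exists>a. sym_diff A B = {a})"
  unfolding hypercube_adj_def by (simp add: card_1_singleton_iff)

lemma hypercube_adj_sym_diff_cancel:
  "hypercube_adj (sym_diff C A) (sym_diff C B) \<longleftrightarrow> hypercube_adj A B"
proof -
  have "sym_diff (sym_diff C A) (sym_diff C B) = sym_diff A B" by blast
  then show ?thesis by (simp add: hypercube_adj_def)
qed

lemma hypercube_adj_Un_disjoint:
  assumes "L \<inter> X = {}" "L \<inter> Y = {}"
  shows "hypercube_adj (L \<union> X) (L \<union> Y) \<longleftrightarrow> hypercube_adj X Y"
proof -
  have "sym_diff (L \<union> X) (L \<union> Y) = sym_diff X Y" using assms by blast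
  then show ?thesis by (simp add: hypercube_adj_def)
qed

lemma hypercube_adj_image:
  assumes "inj_on g (X \<union> Y)"
  shows "hypercube_adj (g ` X) (g ` Y) \<longleftrightarrow> hypercube_adj X Y"
proof -
  have "sym_diff (g ` X) (g ` Y) = g ` sym_diff X Y"
    using assms by (auto simp: inj_on_def)
  moreover have "inj_on g (sym_diff X Y)"
    using assms by (rule inj_on_subset) blast
  ultimately show ?thesis by (simp add: hypercube_adj_def card_image)
qed

lemma hypercube_common_neighbours:
  assumes "u \<in> D" "v \<in> D" "u \<noteq> v" "hypercube_adj T (D - {u})" "hypercube_adj T (D - {v})"
  shows "T = D \<or> T = D - {u, v}"
proof -
  obtain a b where a: "sym_diff T (D - {u}) = {a}" and b: "sym_diff T (D - {v}) = {b}"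
    using assms(4,5) by (auto simp: hypercube_adj_iff)
  have "sym_diff {a} {b} = sym_diff (D - {u}) (D - {v})"
    unfolding a[symmetric] b[symmetric] by blast
  also have "\<dots> = {u, v}"
    using assms(1-3) by blast
  finally have ab: "sym_diff {a} {b} = {u, v}" .
  then have "u \<in> sym_diff {a} {b}" by simp
  then consider "a = u" | "u = b" "a \<noteq> b" by blast
  then have "a = u \<or> a = v"
  proof cases
    case 2
    then have "a \<in> {u, v}" using ab by blast
    with 2 show ?thesis by blast
  qed simp
  moreover have "T = sym_diff (D - {u}) {a}"
    using a by blast
  ultimately show ?thesis
    using assms(1-3) by blast
qed

lemma hypercube_embedding_eq_image:
  assumes inj: "inj_on g (Pow {..<k})" and inj_d: "inj_on d {..<k}"
    and adj: "\<And>A B. A \<subseteq> {..<k} \<Longrightarrow> B \<subseteq> {..<k} \<Longrightarrow> hypercube_adj A B \<Longrightarrow> hypercube_adj (g A) (g B)"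
    and small: "\<And>X. X \<subseteq> {..<k} \<Longrightarrow> card X \<le> 1 \<Longrightarrow> g X = d ` X"
    and "X \<subseteq> {..<k}"
  shows "g X = d ` X"
  using \<open>X \<subseteq> {..<k}\<close>
proof (induction "card X" arbitrary: X rule: less_induct)
  case less
  have "finite X" using less.prems finite_subset by blast
  show ?case
  proof (cases "card X \<le> 1")
    case True
    with small less.prems show ?thesis by blast
  next
    case False
    then obtain i j where ij: "i \<in> X" "j \<in> X" "i \<noteq> j"
      using \<open>finite X\<close> by (auto simp: card_le_Suc0_iff_eq)
    have inj_X: "inj_on d X"
      using inj_on_subset[OF inj_d less.prems] .
    have g_diff: "g (X - Y) = d ` X - d ` Y" if "Y \<subseteq> X" "Y \<noteq> {}" for Y
    proof -
      have "card (X - Y) < card X"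
        using \<open>finite X\<close> that by (intro psubset_card_mono) auto
      then have "g (X - Y) = d ` (X - Y)"
        using less.hyps less.prems by blast
      also have "\<dots> = d ` X - d ` Y"
        using inj_on_image_set_diff[OF inj_X] that by blast
      finally show ?thesis .
    qed
    have adj_diff: "hypercube_adj (g X) (g (X - {x}))" if "x \<in> X" for x
    proof -
      have "sym_diff X (X - {x}) = {x}" using that by blast
      then show ?thesis
        using adj[of X "X - {x}"] less.prems by (auto simp: hypercube_adj_def)
    qed
    \<comment> \<open>\<open>g X\<close> and \<open>g (X - {i, j})\<close> are the only common neighbours of \<open>g (X - {i})\<close>
      and \<open>g (X - {j})\<close>, and they differ since \<open>g\<close> is injective\<close>
    have "d i \<in> d ` X" "d j \<in> d ` X" "d i \<noteq> d j"
      using ij inj_onD[OF inj_X] by blast+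
    from hypercube_common_neighbours[OF this] adj_diff[of i] adj_diff[of j] g_diff[of "{i}"]
      g_diff[of "{j}"] ij
    have "g X = d ` X \<or> g X = d ` X - {d i, d j}"
      by simp
    moreover have "d ` X - {d i, d j} = g (X - {i, j})"
      using g_diff[of "{i, j}"] ij by simp
    moreover have "g X \<noteq> g (X - {i, j})"
      using inj_onD[OF inj] less.prems ij by blast
    ultimately show ?thesis by metis
  qed
qed

lemma hypercube_embedding_normal_form:
  assumes inj: "inj_on g (Pow {..<k})" and g_empty: "g {} = {}"
    and adj: "\<And>A B. A \<subseteq> {..<k} \<Longrightarrow> B \<subseteq> {..<k} \<Longrightarrow> hypercube_adj A B \<Longrightarrow> hypercube_adj (g A) (g B)"
  shows "\<exists>d. inj_on d {..<k} \<and> (\<forall>X\<subseteq>{..<k}. g X = d ` X)"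
proof -
  have "\<exists>a. g {i} = {a}" if "i < k" for i
    using adj[of "{i}" "{}"] that g_empty by (simp add: hypercube_adj_iff)
  then obtain d where d: "\<And>i. i < k \<Longrightarrow> g {i} = {d i}" by metis
  have inj_d: "inj_on d {..<k}"
  proof (rule inj_onI)
    fix i j assume "i \<in> {..<k}" "j \<in> {..<k}" "d i = d j"
    then have "g {i} = g {j}" using d by simp
    with \<open>i \<in> {..<k}\<close> \<open>j \<in> {..<k}\<close> show "i = j" using inj_onD[OF inj] by blast
  qed
  have "g X = d ` X" if "X \<subseteq> {..<k}" "card X \<le> 1" for X
  proof -
    have "card X = 0 \<or> card X = 1" using that(2) by linarith
    then have "X = {} \<or> (\<exists>i. X = {i})"
      using finite_subset[OF that(1)] by (auto simp: card_1_singleton_iff)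
    then show ?thesis using d g_empty that(1) by auto
  qed
  with hypercube_embedding_eq_image[OF inj inj_d adj] inj_d show ?thesis
    by blast
qed

lemma sym_diff_image_Pow: "(\<lambda>B. sym_diff C B) ` Pow A = (\<union>) (C - A) ` Pow A"
proof (intro equalityI image_subsetI)
  fix B assume "B \<in> Pow A"
  then show "sym_diff C B \<in> (\<union>) (C - A) ` Pow A"
    by (intro image_eqI[of _ _ "sym_diff (C \<inter> A) B"]) auto
next
  fix B assume "B \<in> Pow A"
  then show "(C - A) \<union> B \<in> (\<lambda>B. sym_diff C B) ` Pow A"
    by (intro image_eqI[of _ _ "sym_diff (C \<inter> A) B"]) auto
qed

definition addable :: "'a set set \<Rightarrow> 'a set \<Rightarrow> 'a set" where
  "addable V L = {a. a \<notin> L \<and> insert a L \<in> V}"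

lemma induced_cube_is_subcube:
  assumes "induces_cube V hypercube_adj k S"
  shows "\<exists>L A. S = (\<union>) L ` Pow A \<and> L \<in> V \<and> A \<subseteq> addable V L \<and> finite A \<and> card A = k"
proof -
  obtain f where "S \<subseteq> V" and f: "bij_betw f (Pow {..<k}) S"
    and f_adj: "\<forall>A\<in>Pow {..<k}. \<forall>B\<in>Pow {..<k}. hypercube_adj (f A) (f B) \<longleftrightarrow> hypercube_adj A B"
    using assms unfolding induces_cube_def by blast
  define C where "C = f {}"
  have "sym_diff C X = sym_diff C Y \<Longrightarrow> X = Y" for X Y
    by blast
  then have "inj_on (\<lambda>X. sym_diff C (f X)) (Pow {..<k})"
    using bij_betw_imp_inj_on[OF f] by (intro inj_onI) (metis inj_onD)
  moreover have "sym_diff C (f {}) = {}"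
    by (simp add: C_def)
  moreover have "hypercube_adj (sym_diff C (f A)) (sym_diff C (f B))"
    if "A \<subseteq> {..<k}" "B \<subseteq> {..<k}" "hypercube_adj A B" for A B
    using f_adj that by (simp add: hypercube_adj_sym_diff_cancel)
  ultimately have "\<exists>d. inj_on d {..<k} \<and> (\<forall>X\<subseteq>{..<k}. sym_diff C (f X) = d ` X)"
    by (rule hypercube_embedding_normal_form)
  then obtain d where inj_d: "inj_on d {..<k}" and fd: "\<forall>X\<subseteq>{..<k}. sym_diff C (f X) = d ` X"
    by blast
  define A where "A = d ` {..<k}"
  define L where "L = C - A"
  have "f X = sym_diff C (d ` X)" if "X \<subseteq> {..<k}" for X
    using fd that by blast
  then have "S = (\<lambda>B. sym_diff C B) ` (image d ` Pow {..<k})"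
    using bij_betw_imp_surj_on[OF f] by (auto simp: image_image)
  also have "image d ` Pow {..<k} = Pow A"
    by (rule image_Pow_surj) (simp add: A_def)
  finally have S: "S = (\<union>) L ` Pow A"
    by (simp add: sym_diff_image_Pow L_def)
  have "L \<in> V" and "A \<subseteq> addable V L"
    using \<open>S \<subseteq> V\<close> unfolding S addable_def L_def by auto
  moreover have "finite A" "card A = k"
    using inj_d by (simp_all add: A_def card_image)
  ultimately show ?thesis using S by blast
qed

lemma subcube_is_induced_cube:
  assumes union_closed: "\<And>F G. F \<in> V \<Longrightarrow> G \<in> V \<Longrightarrow> F \<union> G \<in> V"
    and "L \<in> V" "A \<subseteq> addable V L" "finite A"
  shows "induces_cube V hypercube_adj (card A) ((\<union>) L ` Pow A)"
proof -
  have "L \<union> B \<in> V" if "B \<subseteq> A" for B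
    using finite_subset[OF that \<open>finite A\<close>] that
  proof (induction B rule: finite_induct)
    case (insert b B)
    have "insert b L \<in> V"
      using insert.prems assms(3) by (auto simp: addable_def)
    from union_closed[OF this insert.IH] insert.prems show ?case by simp
  qed (simp add: \<open>L \<in> V\<close>)
  then have "(\<union>) L ` Pow A \<subseteq> V" by blast
  have disjoint: "L \<inter> A = {}"
    using assms(3) by (auto simp: addable_def)
  obtain h where h: "bij_betw h {..<card A} A"
    using ex_bij_betw_nat_finite[OF \<open>finite A\<close>] by (auto simp: atLeast0LessThan)
  have "bij_betw ((\<union>) L) (Pow A) ((\<union>) L ` Pow A)"
    using disjoint by (auto simp: bij_betw_def inj_on_def)
  then have bij: "bij_betw (\<lambda>X. L \<union> h ` X) (Pow {..<card A}) ((\<union>) L ` Pow A)"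
    using bij_betw_trans[OF bij_betw_image_Pow[OF h]] by (simp add: comp_def)
  have "hypercube_adj (L \<union> h ` X) (L \<union> h ` Y) \<longleftrightarrow> hypercube_adj X Y"
    if "X \<subseteq> {..<card A}" "Y \<subseteq> {..<card A}" for X Y
  proof -
    have "L \<inter> h ` X = {}" "L \<inter> h ` Y = {}"
      using that bij_betw_imp_surj_on[OF h] disjoint by blast+
    moreover have "inj_on h (X \<union> Y)"
      using that bij_betw_imp_inj_on[OF h] by (auto intro: inj_on_subset)
    ultimately show ?thesis
      by (simp add: hypercube_adj_Un_disjoint hypercube_adj_image)
  qed
  with bij \<open>(\<union>) L ` Pow A \<subseteq> V\<close> show ?thesis
    unfolding induces_cube_def by blast
qed

lemma inj_on_subcube: "inj_on (\<lambda>(L, A). (\<union>) L ` Pow A) {(L, A). L \<inter> A = {}}"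
proof (rule inj_onI, clarify)
  fix L A L' A' :: "'a set"
  assume "L \<inter> A = {}" "L' \<inter> A' = {}" and eq: "(\<union>) L ` Pow A = (\<union>) L' ` Pow A'"
  have "\<Inter>((\<union>) L ` Pow A) = L" "\<Union>((\<union>) L ` Pow A) = L \<union> A" for L A :: "'a set"
    by blast+
  from this[of L A] this[of L' A'] eq have "L = L'" "L \<union> A = L' \<union> A'"
    by simp_all
  with \<open>L \<inter> A = {}\<close> \<open>L' \<inter> A' = {}\<close> show "L = L' \<and> A = A'"
    by blast
qed

lemma card_induced_cubes_union_closed:
  assumes "finite (\<Union>V)" and union_closed: "\<And>F G. F \<in> V \<Longrightarrow> G \<in> V \<Longrightarrow> F \<union> G \<in> V"
  shows "card {S. induces_cube V hypercube_adj k S} = (\<Sum>L\<in>V. card (addable V L) choose k)"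
proof -
  define P where "P = (SIGMA L:V. {A. A \<subseteq> addable V L \<and> card A = k})"
  have finite_addable: "finite (addable V L)" for L
    by (rule finite_subset[OF _ assms(1)]) (auto simp: addable_def)
  have "{S. induces_cube V hypercube_adj k S} = (\<lambda>(L, A). (\<union>) L ` Pow A) ` P"
  proof (intro equalityI subsetI)
    fix S assume "S \<in> {S. induces_cube V hypercube_adj k S}"
    then obtain L A where "S = (\<union>) L ` Pow A" "L \<in> V" "A \<subseteq> addable V L" "card A = k"
      using induced_cube_is_subcube[of V k S] by auto
    then show "S \<in> (\<lambda>(L, A). (\<union>) L ` Pow A) ` P"
      unfolding P_def by (intro image_eqI[of _ _ "(L, A)"]) auto
  next
    fix S assume "S \<in> (\<lambda>(L, A). (\<union>) L ` Pow A) ` P"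
    then obtain L A where "S = (\<union>) L ` Pow A" "L \<in> V" "A \<subseteq> addable V L" "card A = k"
      unfolding P_def by auto
    moreover have "finite A"
      using \<open>A \<subseteq> addable V L\<close> finite_addable by (rule finite_subset)
    ultimately show "S \<in> {S. induces_cube V hypercube_adj k S}"
      using subcube_is_induced_cube[OF union_closed] by auto
  qed
  moreover have "inj_on (\<lambda>(L, A). (\<union>) L ` Pow A) P"
    by (rule inj_on_subset[OF inj_on_subcube]) (auto simp: P_def addable_def)
  ultimately have "card {S. induces_cube V hypercube_adj k S} = card P"
    by (simp add: card_image)
  also have "\<dots> = (\<Sum>L\<in>V. card (addable V L) choose k)"
    using assms(1) finite_addable by (simp add: P_def finite_UnionD n_subsets)
  finally show ?thesis .
qed

section \<open>Filters of the fence \<open>\<Xi>\<^sub>n\<close>\<close>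

lemma omega_adj_eq_hypercube_adj: "omega_adj = hypercube_adj"
  unfolding omega_adj_def hypercube_adj_iff fun_eq_iff
  by (auto simp: set_eq_iff; metis)

definition xi_up :: "nat \<Rightarrow> nat set" where
  "xi_up e = (if e = 2 then {1} else if odd e \<and> 3 \<le> e then {e - 1, e + 1} else {})"

lemma xi_up_bounds: "x \<in> xi_up e \<Longrightarrow> 1 \<le> x \<and> x \<le> Suc e \<and> x \<noteq> e"
  unfolding xi_up_def by (auto split: if_splits)

lemma xi_up_even: "even e \<Longrightarrow> 4 \<le> e \<Longrightarrow> xi_up e = {}"
  unfolding xi_up_def by auto

lemma xi_up_odd: "odd e \<Longrightarrow> 3 \<le> e \<Longrightarrow> xi_up e = {e - 1, Suc e}"
  unfolding xi_up_def by auto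

lemma Suc_mem_xi_up_iff: "Suc e \<in> xi_up e \<longleftrightarrow> odd e \<and> 3 \<le> e"
  unfolding xi_up_def by auto

lemma xi_cover_iff: "xi_cover n i j \<longleftrightarrow> i \<in> {1..n} \<and> j \<in> {1..n} \<and> j \<in> xi_up i"
  unfolding xi_cover_def xi_up_def
  by (auto split: if_splits intro: exI[of _ "i - 1"] exI[of _ i])

lemma xi_filters_eq: "xi_filters n = {F. F \<subseteq> {1..n} \<and> (\<forall>e\<in>F. \<forall>x\<in>xi_up e. x \<le> n \<longrightarrow> x \<in> F)}"
proof -
  have "(\<forall>i j. i \<in> F \<longrightarrow> j \<in> {1..n} \<longrightarrow> xi_le n i j \<longrightarrow> j \<in> F) \<longleftrightarrow>
        (\<forall>e\<in>F. \<forall>x\<in>xi_up e. x \<le> n \<longrightarrow> x \<in> F)"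
    if "F \<subseteq> {1..n}" for F
  proof
    assume up_closed: "\<forall>i j. i \<in> F \<longrightarrow> j \<in> {1..n} \<longrightarrow> xi_le n i j \<longrightarrow> j \<in> F"
    show "\<forall>e\<in>F. \<forall>x\<in>xi_up e. x \<le> n \<longrightarrow> x \<in> F"
    proof (intro ballI impI)
      fix e x assume "e \<in> F" "x \<in> xi_up e" "x \<le> n"
      then have "x \<in> {1..n}" "xi_cover n e x"
        using that xi_up_bounds[of x e] by (auto simp: xi_cover_iff)
      then show "x \<in> F"
        using up_closed \<open>e \<in> F\<close> unfolding xi_le_def by blast
    qed
  next
    assume closed: "\<forall>e\<in>F. \<forall>x\<in>xi_up e. x \<le> n \<longrightarrow> x \<in> F"
    have "j \<in> F" if "xi_le n i j" "i \<in> F" for i j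
      using that unfolding xi_le_def
      by (induction rule: rtranclp_induct) (use closed in \<open>auto simp: xi_cover_iff\<close>)
    then show "\<forall>i j. i \<in> F \<longrightarrow> j \<in> {1..n} \<longrightarrow> xi_le n i j \<longrightarrow> j \<in> F" by blast
  qed
  then show ?thesis unfolding xi_filters_def by blast
qed

lemma xi_filters_subset: "F \<in> xi_filters n \<Longrightarrow> F \<subseteq> {1..n}"
  by (simp add: xi_filters_eq)

lemma finite_xi_filters: "finite (xi_filters n)"
  by (rule finite_subset[of _ "Pow {1..n}"]) (auto simp: xi_filters_eq)

lemma xi_filters_Un: "F \<in> xi_filters n \<Longrightarrow> G \<in> xi_filters n \<Longrightarrow> F \<union> G \<in> xi_filters n"
  by (auto simp: xi_filters_eq)

lemma xi_filters_2: "xi_filters 2 = {{}, {1}, {1, 2}}"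
proof -
  have "{1..2::nat} = {1, 2}" by auto
  then have "xi_filters 2 = {F \<in> Pow {1, 2}. \<forall>e\<in>{1, 2}. e \<in> F \<longrightarrow> (\<forall>x\<in>xi_up e. x \<le> 2 \<longrightarrow> x \<in> F)}"
    unfolding xi_filters_eq by blast
  also have "\<dots> = {F \<in> {{}, {1}, {2}, {1, 2}}. 2 \<in> F \<longrightarrow> 1 \<in> F}"
    by (simp add: xi_up_def Pow_insert insert_commute)
  also have "\<dots> = {{}, {1}, {1, 2}}"
    by auto
  finally show ?thesis .
qed

lemma xi_filters_3: "xi_filters 3 = {{}, {1}, {1, 2}, {1, 2, 3}}"
proof -
  have "{1..3::nat} = {1, 2, 3}" by auto
  then have "xi_filters 3 = {F \<in> Pow {1, 2, 3}. \<forall>e\<in>{1, 2, 3}. e \<in> F \<longrightarrow> (\<forall>x\<in>xi_up e. x \<le> 3 \<longrightarrow> x \<in> F)}"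
    unfolding xi_filters_eq by blast
  also have "\<dots> = {F \<in> {{}, {1}, {2}, {3}, {1, 2}, {1, 3}, {2, 3}, {1, 2, 3}}.
      (2 \<in> F \<longrightarrow> 1 \<in> F) \<and> (3 \<in> F \<longrightarrow> 2 \<in> F)}"
    by (simp add: xi_up_def Pow_insert insert_commute)
  also have "\<dots> = {{}, {1}, {1, 2}, {1, 2, 3}}"
    by auto
  finally show ?thesis .
qed

definition xi_addable :: "nat \<Rightarrow> nat set \<Rightarrow> nat set" where
  "xi_addable n F = {e \<in> {1..n}. e \<notin> F \<and> (\<forall>x\<in>xi_up e. x \<le> n \<longrightarrow> x \<in> F)}"

lemma addable_xi_filters:
  "F \<in> xi_filters n \<Longrightarrow> addable (xi_filters n) F = xi_addable n F"
  using xi_up_bounds by (auto simp: xi_filters_eq xi_addable_def addable_def)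

lemma card_xi_addable_le: "card (xi_addable n F) \<le> n"
proof -
  have "xi_addable n F \<subseteq> {1..n}"
    by (auto simp: xi_addable_def)
  from card_mono[OF finite_atLeastAtMost this] show ?thesis by simp
qed

lemma q_eq_sum_binomial: "q n k = (\<Sum>F\<in>xi_filters n. card (xi_addable n F) choose k)"
proof -
  have "finite (\<Union>(xi_filters n))"
    by (rule finite_subset[of _ "{1..n}"]) (auto simp: xi_filters_eq)
  then show ?thesis
    unfolding q_def omega_adj_eq_hypercube_adj
    by (simp add: card_induced_cubes_union_closed xi_filters_Un addable_xi_filters)
qed

definition filter_weight :: "nat \<Rightarrow> 'a::comm_ring_1 \<Rightarrow> 'a" where
  "filter_weight n y = (\<Sum>F\<in>xi_filters n. y ^ card (xi_addable n F))"

lemma poly_cube_poly: "poly (cube_poly n) z = filter_weight n (1 + z)"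
proof -
  have binomial: "(\<Sum>k\<le>n. of_nat (m choose k) * z ^ k) = (1 + z) ^ m" if "m \<le> n" for m
  proof -
    have "(\<Sum>k\<le>n. of_nat (m choose k) * z ^ k) = (\<Sum>k\<le>m. of_nat (m choose k) * z ^ k)"
      using that by (intro sum.mono_neutral_right) (simp_all add: binomial_eq_0 not_le)
    then show ?thesis using binomial_ring[of z 1 m] by (simp add: add.commute)
  qed
  have "poly (cube_poly n) z =
      (\<Sum>k\<le>n. \<Sum>F\<in>xi_filters n. of_nat (card (xi_addable n F) choose k) * z ^ k)"
    by (simp add: cube_poly_def poly_sum poly_monom q_eq_sum_binomial sum_distrib_right)
  also have "\<dots> = (\<Sum>F\<in>xi_filters n. \<Sum>k\<le>n. of_nat (card (xi_addable n F) choose k) * z ^ k)"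
    by (rule sum.swap)
  also have "\<dots> = filter_weight n (1 + z)"
    unfolding filter_weight_def by (intro sum.cong refl binomial card_xi_addable_le)
  finally show ?thesis .
qed

lemma filter_weight_2: "filter_weight 2 y = 1 + 2 * y"
proof -
  have "{1..2::nat} = {1, 2}" by auto
  then have "xi_addable 2 {} = {1}" "xi_addable 2 {1} = {2}" "xi_addable 2 {1, 2} = {}"
    by (auto simp: xi_addable_def xi_up_def)
  then have "filter_weight 2 y = y + (y + 1)"
    by (simp add: filter_weight_def xi_filters_2 insert_eq_iff)
  then show ?thesis by simp
qed

lemma filter_weight_3: "filter_weight 3 y = 1 + 3 * y"
proof -
  have "{1..3::nat} = {1, 2, 3}" by auto
  then have "xi_addable 3 {} = {1}" "xi_addable 3 {1} = {2}" "xi_addable 3 {1, 2} = {3}"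
    "xi_addable 3 {1, 2, 3} = {}"
    by (auto simp: xi_addable_def xi_up_def)
  then have "filter_weight 3 y = y + (y + (y + 1))"
    by (simp add: filter_weight_def xi_filters_3 insert_eq_iff)
  then show ?thesis by simp
qed

lemma insert_Suc_mem_xi_filters_iff:
  assumes "G \<subseteq> {1..n}"
  shows "insert (Suc n) G \<in> xi_filters (Suc n) \<longleftrightarrow>
         G \<in> xi_filters n \<and> (\<forall>x\<in>xi_up (Suc n). x \<le> n \<longrightarrow> x \<in> G)"
  using assms xi_up_bounds unfolding xi_filters_eq by (fastforce simp: le_Suc_eq)

lemma mem_xi_filters_Suc_iff:
  assumes "G \<subseteq> {1..n}"
  shows "G \<in> xi_filters (Suc n) \<longleftrightarrow> G \<in> xi_filters n \<and> (n \<in> G \<longrightarrow> Suc n \<notin> xi_up n)"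
  using assms xi_up_bounds unfolding xi_filters_eq by (fastforce simp: le_Suc_eq)

lemma xi_addable_insert_Suc:
  assumes "G \<subseteq> {1..n}"
  shows "xi_addable (Suc n) (insert (Suc n) G) = xi_addable n G"
  using assms xi_up_bounds unfolding xi_addable_def by (fastforce simp: le_Suc_eq)

lemma xi_filters_Suc_subset:
  "F \<in> xi_filters (Suc n) \<Longrightarrow> F - {Suc n} \<subseteq> {1..n}"
  using xi_filters_subset[of F "Suc n"] by (auto simp: subset_iff le_Suc_eq)

lemma xi_filters_with_top:
  "{F \<in> xi_filters (Suc n). Suc n \<in> F} =
   insert (Suc n) ` {G \<in> xi_filters n. \<forall>x\<in>xi_up (Suc n). x \<le> n \<longrightarrow> x \<in> G}"
proof (intro equalityI subsetI)
  fix F assume "F \<in> {F \<in> xi_filters (Suc n). Suc n \<in> F}"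
  then have F: "F \<in> xi_filters (Suc n)" "Suc n \<in> F"
    by simp_all
  then have "F - {Suc n} \<in> {G \<in> xi_filters n. \<forall>x\<in>xi_up (Suc n). x \<le> n \<longrightarrow> x \<in> G}"
    using insert_Suc_mem_xi_filters_iff[OF xi_filters_Suc_subset[OF F(1)]]
    by (simp add: insert_absorb)
  moreover have "F = insert (Suc n) (F - {Suc n})"
    using F(2) by (simp add: insert_absorb)
  ultimately show "F \<in> insert (Suc n) ` {G \<in> xi_filters n. \<forall>x\<in>xi_up (Suc n). x \<le> n \<longrightarrow> x \<in> G}"
    by (rule rev_image_eqI)
next
  fix F assume "F \<in> insert (Suc n) ` {G \<in> xi_filters n. \<forall>x\<in>xi_up (Suc n). x \<le> n \<longrightarrow> x \<in> G}"
  then obtain G where G: "G \<in> xi_filters n" "\<forall>x\<in>xi_up (Suc n). x \<le> n \<longrightarrow> x \<in> G"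
    and "F = insert (Suc n) G"
    by blast
  with insert_Suc_mem_xi_filters_iff[OF xi_filters_subset[OF G(1)]]
  show "F \<in> {F \<in> xi_filters (Suc n). Suc n \<in> F}"
    by simp
qed

lemma xi_filters_without_top:
  "{F \<in> xi_filters (Suc n). Suc n \<notin> F} = {G \<in> xi_filters n. n \<in> G \<longrightarrow> Suc n \<notin> xi_up n}"
proof (intro equalityI subsetI)
  fix F assume "F \<in> {F \<in> xi_filters (Suc n). Suc n \<notin> F}"
  then have "F \<in> xi_filters (Suc n)" "F \<subseteq> {1..n}"
    using xi_filters_Suc_subset by auto
  with mem_xi_filters_Suc_iff[OF \<open>F \<subseteq> {1..n}\<close>]
  show "F \<in> {G \<in> xi_filters n. n \<in> G \<longrightarrow> Suc n \<notin> xi_up n}"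
    by simp
next
  fix G assume "G \<in> {G \<in> xi_filters n. n \<in> G \<longrightarrow> Suc n \<notin> xi_up n}"
  moreover have "Suc n \<notin> G"
    using calculation xi_filters_subset by fastforce
  ultimately show "G \<in> {F \<in> xi_filters (Suc n). Suc n \<notin> F}"
    using mem_xi_filters_Suc_iff[OF xi_filters_subset] by simp
qed

lemma sum_xi_filters_split:
  "(\<Sum>F\<in>xi_filters n. g F) =
   (\<Sum>F | F \<in> xi_filters n \<and> n \<in> F. g F) + (\<Sum>F | F \<in> xi_filters n \<and> n \<notin> F. g F)"
  by (subst sum.union_disjoint[symmetric]) (auto intro: sum.cong simp: finite_xi_filters)

definition filter_weight_with_top :: "nat \<Rightarrow> 'a::comm_ring_1 \<Rightarrow> 'a" where
  "filter_weight_with_top n y = (\<Sum>F | F \<in> xi_filters n \<and> n \<in> F. y ^ card (xi_addable n F))"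

definition filter_weight_without_top :: "nat \<Rightarrow> 'a::comm_ring_1 \<Rightarrow> 'a" where
  "filter_weight_without_top n y = (\<Sum>F | F \<in> xi_filters n \<and> n \<notin> F. y ^ card (xi_addable n F))"

lemma filter_weight_split:
  "filter_weight n y = filter_weight_with_top n y + filter_weight_without_top n y"
  unfolding filter_weight_def filter_weight_with_top_def filter_weight_without_top_def
  by (rule sum_xi_filters_split)

lemma filter_weight_with_top_Suc:
  "filter_weight_with_top (Suc n) y =
   (\<Sum>G | G \<in> xi_filters n \<and> (\<forall>x\<in>xi_up (Suc n). x \<le> n \<longrightarrow> x \<in> G). y ^ card (xi_addable n G))"
proof -
  have "inj_on (insert (Suc n)) (xi_filters n)"
  proof (rule inj_onI)
    fix F G assume "F \<in> xi_filters n" "G \<in> xi_filters n" "insert (Suc n) F = insert (Suc n) G"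
    moreover have "Suc n \<notin> F" "Suc n \<notin> G"
      using calculation(1,2) xi_filters_subset by fastforce+
    ultimately show "F = G"
      by (metis insert_ident)
  qed
  then have "filter_weight_with_top (Suc n) y =
    (\<Sum>G | G \<in> xi_filters n \<and> (\<forall>x\<in>xi_up (Suc n). x \<le> n \<longrightarrow> x \<in> G).
       y ^ card (xi_addable (Suc n) (insert (Suc n) G)))"
    unfolding filter_weight_with_top_def xi_filters_with_top
    by (subst sum.reindex) (auto intro: inj_on_subset)
  also have "\<dots> = (\<Sum>G | G \<in> xi_filters n \<and> (\<forall>x\<in>xi_up (Suc n). x \<le> n \<longrightarrow> x \<in> G).
       y ^ card (xi_addable n G))"
    using xi_addable_insert_Suc xi_filters_subset by (intro sum.cong refl) auto
  finally show ?thesis .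
qed

lemma xi_addable_Suc_Suc_even:
  assumes "even k" "2 \<le> k" "G \<subseteq> {1..k}"
  shows "xi_addable (Suc (Suc k)) G = insert (Suc (Suc k)) (xi_addable k G)"
proof -
  have "xi_up (Suc (Suc k)) = {}" "xi_up (Suc k) = {k, Suc (Suc k)}" "Suc k \<notin> xi_up k"
    using assms by (simp_all add: xi_up_even xi_up_odd Suc_mem_xi_up_iff)
  then show ?thesis
    using assms(3) xi_up_bounds unfolding xi_addable_def by (fastforce simp: le_Suc_eq)
qed


text \<open>For odd \<open>m\<close> the element \<open>x\<^sub>m\<^sub>+\<^sub>1\<close> is maximal and covers \<open>x\<^sub>m\<close>: a filter missing
  \<open>x\<^sub>m\<^sub>+\<^sub>1\<close> also misses \<open>x\<^sub>m\<close>, so it is a filter of \<open>\<Xi>\<^sub>m\<^sub>-\<^sub>1\<close> to which \<open>x\<^sub>m\<^sub>+\<^sub>1\<close> is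
  addable.\<close>

lemma filter_weights_Suc_of_odd:
  assumes "odd m" "3 \<le> m"
  shows "filter_weight_with_top (Suc m) y = filter_weight m y"
    and "filter_weight_without_top (Suc m) y = y * filter_weight (m - 1) y"
proof -
  have "xi_up (Suc m) = {}"
    using assms by (simp add: xi_up_even)
  then show "filter_weight_with_top (Suc m) y = filter_weight m y"
    unfolding filter_weight_with_top_Suc filter_weight_def by simp
next
  obtain k where m: "m = Suc k" using assms by (cases m) auto
  have "{F \<in> xi_filters (Suc m). Suc m \<notin> F} = xi_filters k"
    using assms xi_filters_without_top[of m] xi_filters_without_top[of k]
    by (simp add: m Suc_mem_xi_up_iff)
  moreover have "xi_addable (Suc m) G = insert (Suc m) (xi_addable k G)" if "G \<in> xi_filters k" for G
  proof -
    have "even k" "2 \<le> k" using assms m by auto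
    from xi_addable_Suc_Suc_even[OF this xi_filters_subset[OF that]] show ?thesis
      by (simp add: m)
  qed
  moreover have "Suc m \<notin> xi_addable k G" for G
    using m by (simp add: xi_addable_def)
  ultimately show "filter_weight_without_top (Suc m) y = y * filter_weight (m - 1) y"
    unfolding filter_weight_without_top_def filter_weight_def m
    by (simp add: sum_distrib_left finite_subset[OF _ finite_atLeastAtMost] xi_addable_def)
qed

lemma xi_addable_Suc_even:
  assumes "even m" "4 \<le> m" "G \<subseteq> {1..m}"
  shows "xi_addable (Suc m) G = (if m \<in> G then insert (Suc m) (xi_addable m G) else xi_addable m G)"
proof -
  have up: "xi_up (Suc m) = {m, Suc (Suc m)}" "xi_up m = {}"
    using assms by (simp_all add: xi_up_even xi_up_odd)
  have "e \<in> xi_addable (Suc m) G \<longleftrightarrow> e \<in> xi_addable m G \<or> (e = Suc m \<and> m \<in> G)" for e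
  proof (cases "e \<le> m")
    case True
    have "x \<le> m" if "x \<in> xi_up e" for x
      using xi_up_bounds[OF that] True up(2) that by (cases "e = m") auto
    then have "(\<forall>x\<in>xi_up e. x \<le> Suc m \<longrightarrow> x \<in> G) \<longleftrightarrow> (\<forall>x\<in>xi_up e. x \<le> m \<longrightarrow> x \<in> G)"
      using le_SucI by blast
    with True show ?thesis
      by (auto simp: xi_addable_def)
  next
    case False
    then consider "e = Suc m" | "Suc m < e" by linarith
    then show ?thesis
      using assms(3) up(1) by cases (auto simp: xi_addable_def)
  qed
  then show ?thesis
    by auto
qed


text \<open>For even \<open>m\<close> the element \<open>x\<^sub>m\<^sub>+\<^sub>1\<close> is minimal and covered only by \<open>x\<^sub>m\<close>, which is
  maximal: \<open>x\<^sub>m\<^sub>+\<^sub>1\<close> is addable to a filter of \<open>\<Xi>\<^sub>m\<close> exactly when the filter contains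
  \<open>x\<^sub>m\<close>.\<close>

lemma filter_weights_Suc_of_even:
  assumes "even m" "4 \<le> m"
  shows "filter_weight_with_top (Suc m) y = filter_weight_with_top m y"
    and "filter_weight_without_top (Suc m) y =
         y * filter_weight_with_top m y + filter_weight_without_top m y"
proof -
  have "xi_up (Suc m) = {m, Suc (Suc m)}"
    using assms by (simp add: xi_up_odd)
  then show "filter_weight_with_top (Suc m) y = filter_weight_with_top m y"
    unfolding filter_weight_with_top_Suc by (simp add: filter_weight_with_top_def)
next
  have "{F \<in> xi_filters (Suc m). Suc m \<notin> F} = xi_filters m"
    using assms xi_filters_without_top[of m] by (simp add: xi_up_even)
  then have "filter_weight_without_top (Suc m) y =
      (\<Sum>F\<in>xi_filters m. y ^ card (xi_addable (Suc m) F))"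
    by (simp add: filter_weight_without_top_def)
  also have "\<dots> = (\<Sum>F\<in>xi_filters m.
      if m \<in> F then y * y ^ card (xi_addable m F) else y ^ card (xi_addable m F))"
  proof (intro sum.cong refl)
    fix F assume "F \<in> xi_filters m"
    moreover have "Suc m \<notin> xi_addable m F" "finite (xi_addable m F)"
      by (simp_all add: xi_addable_def)
    ultimately show "y ^ card (xi_addable (Suc m) F) =
        (if m \<in> F then y * y ^ card (xi_addable m F) else y ^ card (xi_addable m F))"
      using xi_addable_Suc_even[OF assms xi_filters_subset] by simp
  qed
  also have "\<dots> = (\<Sum>F | F \<in> xi_filters m \<and> m \<in> F. y * y ^ card (xi_addable m F)) +
      (\<Sum>F | F \<in> xi_filters m \<and> m \<notin> F. y ^ card (xi_addable m F))"
    unfolding sum_xi_filters_split[where n = m]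
    by (intro arg_cong2[where f = "(+)"] sum.cong) auto
  finally show "filter_weight_without_top (Suc m) y =
      y * filter_weight_with_top m y + filter_weight_without_top m y"
    by (simp add: filter_weight_with_top_def filter_weight_without_top_def sum_distrib_left)
qed

lemma filter_weight_Suc:
  assumes "3 \<le> m"
  shows "filter_weight (Suc m) y = filter_weight m y + y * filter_weight (m - 1) y"
proof (cases "odd m")
  case True
  then show ?thesis
    using assms by (simp add: filter_weight_split[of "Suc m"] filter_weights_Suc_of_odd)
next
  case False
  then have "even m" "4 \<le> m"
    using assms by presburger+
  then obtain k where k: "m = Suc k" "odd k" "3 \<le> k"
    by (cases m) auto
  have "filter_weight (Suc m) y =
      filter_weight m y + y * filter_weight_with_top m y"
    using \<open>even m\<close> \<open>4 \<le> m\<close>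
    by (simp add: filter_weight_split filter_weights_Suc_of_even algebra_simps)
  also have "filter_weight_with_top m y = filter_weight (m - 1) y"
    using filter_weights_Suc_of_odd(1)[OF k(2,3)] k(1) by simp
  finally show ?thesis .
qed

section \<open>Lucas polynomials\<close>

fun lucas_poly :: "nat \<Rightarrow> 'a::comm_ring_1 poly" where
  "lucas_poly 0 = [:2:]"
| "lucas_poly (Suc 0) = [:1:]"
| "lucas_poly (Suc (Suc n)) = lucas_poly (Suc n) + [:1, 1:] * lucas_poly n"

lemma degree_lucas_poly: "degree (lucas_poly n :: 'a::comm_ring_1 poly) \<le> n div 2"
proof (induction n rule: lucas_poly.induct)
  case (3 n)
  have "degree ([:1, 1:] * (lucas_poly n :: 'a poly)) \<le>
      degree [:1, 1::'a:] + degree (lucas_poly n :: 'a poly)"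
    by (rule degree_mult_le)
  also have "\<dots> \<le> Suc (n div 2)"
    using 3 by simp
  with 3 show ?case by (simp add: degree_add_le)
qed simp_all

lemma lucas_poly_Suc:
  "m \<noteq> 0 \<Longrightarrow> lucas_poly (Suc m) = lucas_poly m + [:1, 1:] * lucas_poly (m - 1)"
  by (cases m) auto

lemma lucas_poly_neq_0:
  assumes "n \<noteq> 0"
  shows "lucas_poly n \<noteq> 0"
proof -
  have "poly (lucas_poly (Suc m)) (- 1) = 1" for m
    by (induction m rule: lucas_poly.induct) simp_all
  then show ?thesis
    using assms by (metis not0_implies_Suc poly_0 zero_neq_one)
qed

lemma filter_weight_eq_poly_lucas_poly:
  fixes z :: "'a::comm_ring_1"
  assumes "2 \<le> n"
  shows "filter_weight n (1 + z) = poly (lucas_poly n) z"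
  using assms
proof (induction n rule: less_induct)
  case (less n)
  consider "n = 2" | "n = 3" | m where "n = Suc m" "3 \<le> m"
    using less.prems by (cases n) fastforce+
  then show ?case
  proof cases
    case 1
    then show ?thesis
      using filter_weight_2[of "1 + z"] by (simp add: numeral_2_eq_2 algebra_simps)
  next
    case 2
    then show ?thesis
      using filter_weight_3[of "1 + z"] by (simp add: numeral_3_eq_3 algebra_simps)
  next
    case (3 m)
    then show ?thesis
      using less.IH[of m] less.IH[of "m - 1"]
      by (simp add: filter_weight_Suc lucas_poly_Suc algebra_simps)
  qed
qed

lemma cube_poly_eq_lucas_poly:
  "2 \<le> n \<Longrightarrow> cube_poly n = (lucas_poly n :: 'a::{idom, ring_char_0} poly)"
  by (simp add: poly_eq_poly_eq_iff[symmetric] fun_eq_iff poly_cube_poly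
      filter_weight_eq_poly_lucas_poly)

lemma poly_lucas_poly_tan:
  fixes t :: real
  assumes "cos t \<noteq> 0"
  shows "poly (lucas_poly m :: 'a::{comm_ring_1, real_algebra_1} poly)
           (of_real (- (5 + (tan t)\<^sup>2) / 4)) =
         of_real (2 * cos (real m * t) / (2 * cos t) ^ m)"
proof (induction m rule: lucas_poly.induct)
  case (3 m)
  define r where "r = - (5 + (tan t)\<^sup>2) / 4"
  define L where "L k = 2 * cos (real k * t) / (2 * cos t) ^ k" for k
  have "cos (real (Suc (Suc m)) * t) = 2 * cos t * cos (real (Suc m) * t) - cos (real m * t)"
    using cos_add[of "real (Suc m) * t" t] cos_diff[of "real (Suc m) * t" t]
    by (simp add: algebra_simps)
  then have "L (Suc (Suc m)) = L (Suc m) + (- 1 / (4 * (cos t)\<^sup>2)) * L m"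
    using assms by (simp add: L_def field_simps power2_eq_square)
  moreover have "1 + r = - 1 / (4 * (cos t)\<^sup>2)"
  proof -
    have "1 + (tan t)\<^sup>2 = 1 / (cos t)\<^sup>2"
      using assms by (simp add: tan_def power_divide field_simps sin_squared_eq)
    then show ?thesis by (simp add: r_def field_simps)
  qed
  ultimately have "L (Suc (Suc m)) = L (Suc m) + (1 + r) * L m"
    by simp
  then have "of_real (L (Suc (Suc m))) =
      (of_real (L (Suc m)) + (1 + of_real r) * of_real (L m) :: 'a)"
    by simp
  with 3 show ?case
    by (simp add: r_def L_def algebra_simps)
qed (use assms in simp_all)

section \<open>The roots\<close>

lemma poly_roots_eq_if_degree_le_card:
  fixes p :: "'a::idom poly"
  assumes "p \<noteq> 0" "finite S" "S \<subseteq> {z. poly p z = 0}" "degree p \<le> card S"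
  shows "{z. poly p z = 0} = S"
proof -
  have roots_finite: "finite {z. poly p z = 0}"
    by (rule poly_roots_finite[OF assms(1)])
  have "card {z. poly p z = 0} \<le> card S"
    using card_poly_roots_bound[OF assms(1)] assms(4) by linarith
  moreover have "card S \<le> card {z. poly p z = 0}"
    by (rule card_mono[OF roots_finite assms(3)])
  ultimately have "card S = card {z. poly p z = 0}"
    by linarith
  from card_subset_eq[OF roots_finite assms(3) this] show ?thesis
    by (rule sym)
qed

definition odd_angle :: "nat \<Rightarrow> nat \<Rightarrow> real" where
  "odd_angle n k = real (2 * k - 1) * pi / real (2 * n)"

lemma odd_angle_bounds:
  assumes "k \<in> {1..n div 2}"
  shows "0 < odd_angle n k" "odd_angle n k < pi / 2"
proof -
  have n: "0 < real n" and k: "1 \<le> real (2 * k - 1)" "real (2 * k - 1) < real n"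
    using assms by auto
  define c where "c = real (2 * k - 1) / real n"
  have angle: "odd_angle n k = c * (pi / 2)"
    using n by (simp add: odd_angle_def c_def field_simps)
  have "0 < c" "c < 1"
    using n k by (simp_all add: c_def)
  then have "0 < c * (pi / 2)" "c * (pi / 2) < 1 * (pi / 2)"
    by (simp_all add: mult_strict_right_mono)
  then show "0 < odd_angle n k" "odd_angle n k < pi / 2"
    by (simp_all add: angle)
qed

lemma cos_mult_odd_angle:
  assumes "n \<noteq> 0" "1 \<le> k"
  shows "cos (real n * odd_angle n k) = 0"
proof -
  have "real n * odd_angle n k = of_int (int (2 * k - 1)) * (pi / 2)"
    using assms by (simp add: odd_angle_def field_simps)
  moreover have "odd (int (2 * k - 1))"
    using assms by simp
  ultimately show ?thesis
    unfolding cos_zero_iff_int by blast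
qed

lemma inj_on_tan_sq_odd_angle: "inj_on (\<lambda>k. (tan (odd_angle n k))\<^sup>2) {1..n div 2}"
proof (rule linorder_inj_onI')
  fix i j assume ij: "i \<in> {1..n div 2}" "j \<in> {1..n div 2}" "i < j"
  then have "odd_angle n i < odd_angle n j"
    unfolding odd_angle_def by (intro divide_strict_right_mono mult_strict_right_mono) auto
  moreover have "- (pi / 2) < odd_angle n i" "odd_angle n j < pi / 2"
    using odd_angle_bounds[OF ij(1)] odd_angle_bounds[OF ij(2)] by linarith+
  ultimately have "tan (odd_angle n i) < tan (odd_angle n j)"
    by (intro tan_monotone)
  moreover have "0 < tan (odd_angle n i)"
    using odd_angle_bounds[OF ij(1)] by (rule tan_gt_zero)
  ultimately show "(tan (odd_angle n i))\<^sup>2 \<noteq> (tan (odd_angle n j))\<^sup>2"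
    by (smt (verit) power2_eq_iff_nonneg)
qed

lemma poly_lucas_poly_odd_angle:
  assumes "k \<in> {1..n div 2}"
  shows "poly (lucas_poly n :: 'a::{comm_ring_1, real_algebra_1} poly)
           (of_real (- (5 + (tan (odd_angle n k))\<^sup>2) / 4)) = 0"
proof -
  have "0 < cos (odd_angle n k)"
    using odd_angle_bounds[OF assms] by (intro cos_gt_zero_pi) auto
  then have "poly (lucas_poly n :: 'a poly) (of_real (- (5 + (tan (odd_angle n k))\<^sup>2) / 4)) =
      of_real (2 * cos (real n * odd_angle n k) / (2 * cos (odd_angle n k)) ^ n)"
    by (intro poly_lucas_poly_tan) simp
  also have "\<dots> = 0"
  proof -
    have "n \<noteq> 0" "1 \<le> k"
      using assms by auto
    then show ?thesis
      by (simp add: cos_mult_odd_angle)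
  qed
  finally show ?thesis .
qed

theorem mainTheorem9:
  fixes n :: nat
  assumes "n \<ge> 2"
  shows "{z :: complex. poly (cube_poly n) z = 0} =
         {complex_of_real (- (5 + (tan (real (2 * k - 1) * pi / real (2 * n)))\<^sup>2) / 4) | k.
            k \<in> {1..n div 2}}"
proof -
  define root where "root k = complex_of_real (- (5 + (tan (odd_angle n k))\<^sup>2) / 4)" for k
  have "inj_on root {1..n div 2}"
  proof (rule inj_onI)
    fix i j assume ij: "i \<in> {1..n div 2}" "j \<in> {1..n div 2}" and "root i = root j"
    then have "(tan (odd_angle n i))\<^sup>2 = (tan (odd_angle n j))\<^sup>2"
      unfolding root_def of_real_eq_iff by simp
    then show "i = j"
      using inj_onD[OF inj_on_tan_sq_odd_angle] ij by blast
  qed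
  then have "degree (lucas_poly n :: complex poly) \<le> card (root ` {1..n div 2})"
    using degree_lucas_poly[of n] by (simp add: card_image)
  moreover have "root ` {1..n div 2} \<subseteq> {z. poly (lucas_poly n) z = 0}"
    using poly_lucas_poly_odd_angle unfolding root_def by blast
  ultimately have "{z. poly (lucas_poly n) z = 0} = root ` {1..n div 2}"
    using assms by (intro poly_roots_eq_if_degree_le_card lucas_poly_neq_0) simp_all
  then show ?thesis
    unfolding cube_poly_eq_lucas_poly[OF assms] Setcompr_eq_image root_def odd_angle_def .
qed

end
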